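(* Let $F$ be a finite field with $q$ elements, let $C\subseteq F^n$ be a balanced code with information length $d$, and let $B$ be a non-empty subset of $C$. Let $\omega=\frac{\sum_{\mathbf{b}\in B}\mathrm{w}(\mathbf{b})}{n|B|}$ be the average relative weight of $B$. If $0\le\omega\le 1-q^{-1}$, then $|B|\le q^{d\,h_q(\omega)}$.
   Context: $\mathrm{w}$ denotes Hamming weight. For $I=\{1,\dots,n\}$ and a subset $I'=\{i_1<\dots<i_d\}$, the projection $F^I\to F^{I'}$ sends $(a_1,\dots,a_n)$ to $(a_{i_1},\dots,a_{i_d})$. A subset $C\subseteq F^n$ is a balanced code with information length $d$ if there exist subsets $I_1,\dots,I_s$ of $I$ (repetitions allowed), each of cardinality $d$, and an integer $t$ such that (i) every index $i\in I$ lies in exactly $t$ of the sets $I_j$; (ii) for each $j$, the projection $F^I\to F^{I_j}$ maps $C$ bijectively onto $F^{I_j}$. The $q$-ary entropy is $h_q(x)=x\log_q(q-1)-x\log_q x-(1-x)\log_q(1-x)$ with $0\log_q0=0$. *)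

theory Defs
  imports "HOL-Library.FuncSet" Complex_Main
begin

text \<open>Vectors in F^n are modelled as extensional functions on the index set
  {0..<n} (i.e. elements of PiE {..<n} (\<lambda>_. UNIV)).\<close>


definition space :: "'i set \<Rightarrow> ('i \<Rightarrow> 'f) set" where
  "space J = PiE J (\<lambda>_. UNIV)"

definition hweight :: "nat \<Rightarrow> (nat \<Rightarrow> 'f::zero) \<Rightarrow> nat" where
  "hweight n x = card {i \<in> {..<n}. x i \<noteq> 0}"

definition proj :: "nat set \<Rightarrow> (nat \<Rightarrow> 'f) \<Rightarrow> (nat \<Rightarrow> 'f)" where
  "proj J x = restrict x J"

definition balanced_code :: "nat \<Rightarrow> nat \<Rightarrow> (nat \<Rightarrow> 'f) set \<Rightarrow> bool" where
  "balanced_code n d C \<longleftrightarrow> C \<subseteq> space {..<n} \<and>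
     (\<exists>s t (Is :: nat \<Rightarrow> nat set). s \<ge> 1 \<and>
        (\<forall>j<s. Is j \<subseteq> {..<n} \<and> card (Is j) = d) \<and>
        (\<forall>i<n. card {j. j < s \<and> i \<in> Is j} = t) \<and>
        (\<forall>j<s. bij_betw (proj (Is j)) C (space (Is j))))"

definition xlogx :: "real \<Rightarrow> real \<Rightarrow> real" where
  "xlogx q x = (if x = 0 then 0 else x * log q x)"

definition entropy_q :: "real \<Rightarrow> real \<Rightarrow> real" where
  "entropy_q q x = x * log q (q - 1) - xlogx q x - xlogx q (1 - x)"

end

theory Submission
  imports Defs "HOL-Library.Cardinality"
begin

text \<open>Fix \<open>mu > 0\<close>. For an information set \<open>J\<close> the projection \<open>C \<rightarrow> F\<^sup>J\<close> is a bijection, so the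
  sum of \<open>mu ^ weight_on J b\<close> over \<open>b \<in> B\<close> is at most the same sum over all of \<open>F\<^sup>J\<close>, which
  factorises as \<open>(1 + (q - 1) mu) ^ d\<close>. By convexity of \<open>exp\<close> that sum is at least
  \<open>|B| mu ^ m\<close>, where \<open>m\<close> is the mean weight of \<open>B\<close> on \<open>J\<close>. Summing the logarithms over the
  \<open>s\<close> information sets, each coordinate lying in exactly \<open>t\<close> of them and \<open>s d = t n\<close>, gives
  \<open>ln |B| + d \<omega> ln mu \<le> d ln (1 + (q - 1) mu)\<close>. The choice \<open>mu = \<omega> / ((q - 1) (1 - \<omega>))\<close>
  turns \<open>ln (1 + (q - 1) mu) - \<omega> ln mu\<close> into \<open>h\<^sub>q(\<omega>) ln q\<close>.\<close>

lemma finite_space: "finite J \<Longrightarrow> finite (space J :: ('i \<Rightarrow> 'f::finite) set)"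
  by (simp add: space_def finite_PiE)

lemma balanced_code_subset_space: "balanced_code n d C \<Longrightarrow> C \<subseteq> space {..<n}"
  by (simp add: balanced_code_def)

lemma balanced_code_finite:
  "balanced_code n d (C :: (nat \<Rightarrow> 'f::finite) set) \<Longrightarrow> finite C"
  by (rule finite_subset[OF balanced_code_subset_space]) (simp_all add: finite_space)

definition weight_on :: "nat set \<Rightarrow> (nat \<Rightarrow> 'f::zero) \<Rightarrow> nat" where
  "weight_on J x = card {i \<in> J. x i \<noteq> 0}"

definition mean_weight :: "nat \<Rightarrow> (nat \<Rightarrow> 'f::zero) set \<Rightarrow> real" where
  "mean_weight n B = (\<Sum>b\<in>B. real (hweight n b)) / (real n * real (card B))"

lemma sum_UNIV_if_nonzero:
  fixes mu :: real
  shows "(\<Sum>v\<in>(UNIV::'f::{zero,finite} set). if v \<noteq> 0 then mu else 1)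
    = 1 + (real CARD('f) - 1) * mu"
proof -
  have "(\<Sum>v\<in>(UNIV::'f set). if v \<noteq> 0 then mu else 1) = 1 + (\<Sum>v\<in>UNIV - {0::'f}. mu)"
    by (simp add: sum.remove[of UNIV 0])
  also have "\<dots> = 1 + real (CARD('f) - 1) * mu"
    by (simp add: card_Diff_singleton)
  finally show ?thesis
    by (simp add: of_nat_diff Suc_leI)
qed

lemma sum_space_power_weight_on:
  fixes mu :: real
  assumes "finite J"
  shows "(\<Sum>x\<in>space J. mu ^ weight_on J (x :: nat \<Rightarrow> 'f::{zero,finite}))
    = (1 + (real CARD('f) - 1) * mu) ^ card J"
proof -
  have "mu ^ weight_on J (x :: nat \<Rightarrow> 'f) = (\<Prod>i\<in>J. if x i \<noteq> 0 then mu else 1)" for x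
    unfolding weight_on_def using assms by (simp add: prod.inter_filter[symmetric])
  then have "(\<Sum>x\<in>space J. mu ^ weight_on J (x :: nat \<Rightarrow> 'f))
      = (\<Sum>x\<in>PiE J (\<lambda>_. UNIV::'f set). \<Prod>i\<in>J. if x i \<noteq> 0 then mu else 1)"
    unfolding space_def by simp
  also have "\<dots> = (\<Prod>i\<in>J. \<Sum>v\<in>(UNIV::'f set). if v \<noteq> 0 then mu else 1)"
    by (rule prod_sum_PiE[symmetric]) (use assms in auto)
  finally show ?thesis
    by (simp add: sum_UNIV_if_nonzero)
qed

lemma card_mult_exp_mean_le_sum_exp:
  fixes a :: "'b \<Rightarrow> real"
  assumes "finite B" "B \<noteq> {}"
  shows "real (card B) * exp ((\<Sum>b\<in>B. a b) / real (card B)) \<le> (\<Sum>b\<in>B. exp (a b))"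
proof -
  define m where "m = (\<Sum>b\<in>B. a b) / real (card B)"
  have card_pos: "real (card B) > 0"
    using assms by (simp add: card_gt_0_iff)
  have tangent: "exp m * (1 + (a b - m)) \<le> exp (a b)" for b
  proof -
    have "exp m * (1 + (a b - m)) \<le> exp m * exp (a b - m)"
      by (rule mult_left_mono) (auto simp: exp_ge_add_one_self)
    then show ?thesis
      by (simp add: exp_diff)
  qed
  have "(\<Sum>b\<in>B. exp m * (1 + (a b - m))) = exp m * real (card B)"
    using card_pos by (simp add: sum_distrib_left[symmetric] sum.distrib sum_subtractf m_def)
  moreover have "(\<Sum>b\<in>B. exp m * (1 + (a b - m))) \<le> (\<Sum>b\<in>B. exp (a b))"
    by (rule sum_mono) (rule tangent)
  ultimately show ?thesis
    by (simp add: m_def mult.commute)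
qed

lemma sum_card_filter_swap:
  "(\<Sum>j<s. card {i \<in> {..<n::nat}. P j i}) = (\<Sum>i<n. card {j \<in> {..<s::nat}. P j i})"
proof -
  have "(\<Sum>j<s. card {i \<in> {..<n::nat}. P j i}) = (\<Sum>j<s. \<Sum>i<n. if P j i then 1 else (0::nat))"
    by (simp add: sum.If_cases Int_def)
  also have "\<dots> = (\<Sum>i<n. \<Sum>j<s. if P j i then 1 else (0::nat))"
    by (rule sum.swap)
  also have "\<dots> = (\<Sum>i<n. card {j \<in> {..<s::nat}. P j i})"
    by (simp add: sum.If_cases Int_def)
  finally show ?thesis .
qed

lemma sum_weight_on_regular_cover:
  assumes "\<forall>j<(s::nat). Is j \<subseteq> {..<n}" "\<forall>i<n. card {j. j < s \<and> i \<in> Is j} = t"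
  shows "(\<Sum>j<s. weight_on (Is j) (b :: nat \<Rightarrow> 'f::zero)) = t * hweight n b"
proof -
  have "(\<Sum>j<s. weight_on (Is j) b) = (\<Sum>j<s. card {i \<in> {..<n}. i \<in> Is j \<and> b i \<noteq> 0})"
    unfolding weight_on_def using assms(1) by (intro sum.cong refl arg_cong[where f=card]) auto
  also have "\<dots> = (\<Sum>i<n. card {j \<in> {..<s}. i \<in> Is j \<and> b i \<noteq> 0})"
    by (rule sum_card_filter_swap)
  also have "\<dots> = (\<Sum>i<n. if b i \<noteq> 0 then t else 0)"
    using assms(2) by (intro sum.cong refl) auto
  also have "\<dots> = t * hweight n b"
    unfolding hweight_def by (simp add: sum.If_cases Int_def)
  finally show ?thesis .
qed

lemma sum_sum_weight_on_regular_cover: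
  assumes "\<forall>j<(s::nat). Is j \<subseteq> {..<n}" "\<forall>i<n. card {j. j < s \<and> i \<in> Is j} = t"
  shows "(\<Sum>j<s. \<Sum>b\<in>B. real (weight_on (Is j) (b :: nat \<Rightarrow> 'f::zero)))
    = t * (\<Sum>b\<in>B. real (hweight n b))"
proof -
  have "(\<Sum>j<s. \<Sum>b\<in>B. real (weight_on (Is j) b)) = (\<Sum>b\<in>B. \<Sum>j<s. real (weight_on (Is j) b))"
    by (rule sum.swap)
  also have "\<dots> = (\<Sum>b\<in>B. real t * real (hweight n b))"
    using sum_weight_on_regular_cover[OF assms]
    by (intro sum.cong refl) (simp flip: of_nat_sum of_nat_mult)
  finally show ?thesis
    by (simp add: sum_distrib_left)
qed

lemma card_regular_cover:
  assumes "\<forall>j<(s::nat). Is j \<subseteq> {..<n} \<and> card (Is j) = d"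
    and "\<forall>i<n. card {j. j < s \<and> i \<in> Is j} = t"
  shows "s * d = t * n"
proof -
  have "weight_on (Is j) (\<lambda>_. 1::nat) = d" if "j < s" for j
    using assms(1) that by (simp add: weight_on_def)
  then have "s * d = (\<Sum>j<s. weight_on (Is j) (\<lambda>_. 1::nat))"
    by simp
  also have "\<dots> = t * hweight n (\<lambda>_. 1::nat)"
    using assms by (intro sum_weight_on_regular_cover) auto
  also have "hweight n (\<lambda>_. 1::nat) = n"
    by (simp add: hweight_def)
  finally show ?thesis .
qed

lemma sum_power_weight_on_le:
  fixes mu :: real and B C :: "(nat \<Rightarrow> 'f::{zero,finite}) set"
  assumes "bij_betw (proj J) C (space J)" "B \<subseteq> C" "finite J" "mu > 0"
  shows "(\<Sum>b\<in>B. mu ^ weight_on J b) \<le> (1 + (real CARD('f) - 1) * mu) ^ card J"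
proof -
  have weight_proj: "weight_on J (proj J b) = weight_on J b" for b :: "nat \<Rightarrow> 'f"
    unfolding weight_on_def proj_def by (auto intro!: arg_cong[where f=card])
  have inj: "inj_on (proj J) B"
    using assms(1,2) bij_betw_imp_inj_on inj_on_subset by blast
  have image: "proj J ` B \<subseteq> space J"
    using assms(1,2) bij_betw_imp_surj_on by blast
  have "(\<Sum>b\<in>B. mu ^ weight_on J b) = (\<Sum>x\<in>proj J ` B. mu ^ weight_on J x)"
    by (simp add: sum.reindex[OF inj] weight_proj)
  also have "\<dots> \<le> (\<Sum>x\<in>space J. mu ^ weight_on J (x :: nat \<Rightarrow> 'f))"
    using assms(3,4) image by (intro sum_mono2 finite_space) auto
  also have "\<dots> = (1 + (real CARD('f) - 1) * mu) ^ card J"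
    by (rule sum_space_power_weight_on[OF assms(3)])
  finally show ?thesis .
qed

lemma ln_card_plus_mean_weight_on_le:
  fixes mu :: real and B C :: "(nat \<Rightarrow> 'f::{zero,finite}) set"
  assumes "bij_betw (proj J) C (space J)" "B \<subseteq> C" "finite J" "mu > 0" "finite B" "B \<noteq> {}"
  shows "ln (card B) + ln mu * (\<Sum>b\<in>B. real (weight_on J b)) / card B
    \<le> card J * ln (1 + (real CARD('f) - 1) * mu)"
proof -
  define m where "m = ln mu * (\<Sum>b\<in>B. real (weight_on J b)) / card B"
  have card_pos: "real (card B) > 0"
    using assms by (simp add: card_gt_0_iff)
  have base_pos: "1 + (real CARD('f) - 1) * mu > 0"
    using assms(4) by (simp add: Suc_leI add_pos_nonneg)
  have "m = (\<Sum>b\<in>B. real (weight_on J b) * ln mu) / card B"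
    by (simp add: m_def sum_distrib_left mult.commute)
  then have "card B * exp m \<le> (\<Sum>b\<in>B. exp (real (weight_on J b) * ln mu))"
    using card_mult_exp_mean_le_sum_exp[OF assms(5,6)] by simp
  also have "\<dots> = (\<Sum>b\<in>B. mu ^ weight_on J b)"
    using assms(4) by (simp add: exp_of_nat_mult)
  also have "\<dots> \<le> (1 + (real CARD('f) - 1) * mu) ^ card J"
    by (rule sum_power_weight_on_le[OF assms(1-4)])
  finally have "ln (card B * exp m) \<le> ln ((1 + (real CARD('f) - 1) * mu) ^ card J)"
    using card_pos base_pos by (subst ln_le_cancel_iff) auto
  then show ?thesis
    using card_pos base_pos by (simp add: ln_mult ln_realpow m_def)
qed

lemma balanced_code_ln_card_le:
  fixes C B :: "(nat \<Rightarrow> 'f::{zero,finite}) set" and mu :: real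
  assumes "balanced_code n d C" "B \<subseteq> C" "B \<noteq> {}" "n > 0" "mu > 0"
  shows "ln (card B) + d * mean_weight n B * ln mu
    \<le> d * ln (1 + (real CARD('f) - 1) * mu)"
proof -
  define N where "N = real (card B)"
  define W where "W = (\<Sum>b\<in>B. real (hweight n b))"
  define L where "L = ln (1 + (real CARD('f) - 1) * mu)"
  obtain s t and Is :: "nat \<Rightarrow> nat set" where
    "s \<ge> 1" and cover: "\<forall>j<s. Is j \<subseteq> {..<n} \<and> card (Is j) = d"
    and regular: "\<forall>i<n. card {j. j < s \<and> i \<in> Is j} = t"
    and bij: "\<forall>j<s. bij_betw (proj (Is j)) C (space (Is j))"
    using assms(1) unfolding balanced_code_def by blast
  define A where "A j = (\<Sum>b\<in>B. real (weight_on (Is j) b))" for j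
  have "finite B"
    by (rule finite_subset[OF assms(2) balanced_code_finite[OF assms(1)]])
  then have "N > 0"
    using assms(3) by (simp add: N_def card_gt_0_iff)
  have per_set: "ln N + ln mu * A j / N \<le> d * L" if "j < s" for j
  proof -
    have "finite (Is j)"
      using cover that finite_subset[of "Is j" "{..<n}"] by blast
    then show ?thesis
      using ln_card_plus_mean_weight_on_le[OF _ assms(2) _ assms(5) \<open>finite B\<close> assms(3)]
        bij cover that
      unfolding N_def L_def A_def by auto
  qed
  have sum_A: "(\<Sum>j<s. A j) = t * W"
    unfolding A_def W_def using cover by (intro sum_sum_weight_on_regular_cover regular) auto
  have "real s * d = real t * n"
    using card_regular_cover[OF cover regular] by (metis of_nat_mult)
  then have "real t * W / N = s * (d * (W / (n * N)))"
    using assms(4) \<open>N > 0\<close> by (simp add: field_simps)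
  then have weights: "ln mu * (t * W / N) = s * (d * (W / (n * N)) * ln mu)"
    by simp
  have "(\<Sum>j<s. ln N + ln mu * A j / N) = s * ln N + ln mu * (\<Sum>j<s. A j) / N"
    by (simp add: sum.distrib sum_distrib_left sum_divide_distrib)
  also have "\<dots> = s * (ln N + d * (W / (n * N)) * ln mu)"
    using weights by (simp add: sum_A distrib_left)
  finally have "(\<Sum>j<s. ln N + ln mu * A j / N) = s * (ln N + d * (W / (n * N)) * ln mu)" .
  moreover have "(\<Sum>j<s. ln N + ln mu * A j / N) \<le> s * (d * L)"
    using sum_mono[of "{..<s}", OF per_set] by simp
  ultimately show ?thesis
    using \<open>s \<ge> 1\<close> unfolding N_def W_def L_def mean_weight_def by simp
qed

lemma entropy_q_mult_ln:
  fixes q w :: real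
  assumes "q > 1" "0 < w" "w < 1"
  defines "mu \<equiv> w / ((q - 1) * (1 - w))"
  shows "ln (1 + (q - 1) * mu) - w * ln mu = entropy_q q w * ln q"
proof -
  have "(q - 1) * mu = w / (1 - w)"
    using assms by (simp add: mu_def)
  then have "1 + (q - 1) * mu = 1 / (1 - w)"
    using assms by (simp add: field_simps)
  then have ln_base: "ln (1 + (q - 1) * mu) = - ln (1 - w)"
    using assms by (simp add: ln_div)
  have ln_mu: "ln mu = ln w - ln (q - 1) - ln (1 - w)"
    using assms by (simp add: mu_def ln_div ln_mult)
  have entropy: "entropy_q q w * ln q = w * ln (q - 1) - w * ln w - (1 - w) * ln (1 - w)"
    using assms by (simp add: entropy_q_def xlogx_def log_def field_simps)
  show ?thesis
    unfolding ln_base ln_mu entropy by (simp add: algebra_simps)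
qed

lemma balanced_code_card_le_powr_entropy_q:
  fixes C B :: "(nat \<Rightarrow> 'f::{zero,finite}) set"
  assumes "balanced_code n d C" "B \<subseteq> C" "B \<noteq> {}" "CARD('f) > 1"
    and "0 < mean_weight n B" "mean_weight n B < 1"
  shows "card B \<le> CARD('f) powr (d * entropy_q CARD('f) (mean_weight n B))"
proof -
  define q where "q = real CARD('f)"
  define w where "w = mean_weight n B"
  define mu where "mu = w / ((q - 1) * (1 - w))"
  have "q > 1" "0 < w" "w < 1"
    using assms(4-6) by (simp_all add: q_def w_def)
  then have "mu > 0"
    by (simp add: mu_def)
  have "n > 0"
    using assms(5) by (cases "n = 0") (simp_all add: mean_weight_def)
  from balanced_code_ln_card_le[OF assms(1-3) this \<open>mu > 0\<close>]
  have "ln (card B) \<le> d * (ln (1 + (q - 1) * mu) - w * ln mu)"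
    by (simp add: q_def w_def algebra_simps)
  also have "\<dots> = d * entropy_q q w * ln q"
    using entropy_q_mult_ln[OF \<open>q > 1\<close> \<open>0 < w\<close> \<open>w < 1\<close>] by (simp add: mu_def)
  finally have "card B \<le> exp (d * entropy_q q w * ln q)"
    using assms(3) finite_subset[OF assms(2) balanced_code_finite[OF assms(1)]]
    by (metis card_gt_0_iff exp_le_cancel_iff exp_ln of_nat_0_less_iff)
  then show ?thesis
    using \<open>q > 1\<close> by (simp add: q_def w_def powr_def mult.assoc)
qed

lemma card_le_1_if_mean_weight_zero:
  assumes "B \<subseteq> space {..<n}" "finite B" "mean_weight n B = 0"
  shows "card B \<le> 1"
proof -
  have "hweight n b = 0" if "b \<in> B" for b
    using assms that by (auto simp: mean_weight_def hweight_def sum_nonneg_eq_0_iff)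
  then have "b = (\<lambda>i. if i < n then 0 else undefined)" if "b \<in> B" for b
    using assms(1) that by (fastforce simp: hweight_def space_def PiE_def extensional_def)
  then have "B \<subseteq> {\<lambda>i. if i < n then 0 else undefined}"
    by blast
  then show ?thesis
    using card_mono[of "{\<lambda>i. if i < n then 0 else undefined}" B] by simp
qed

theorem theorem3p3:
  fixes C B :: "(nat \<Rightarrow> 'f::{field,finite}) set" and n d :: nat
  assumes "balanced_code n d C"
    and "B \<subseteq> C" and "B \<noteq> {}"
    and "0 \<le> (\<Sum>b\<in>B. real (hweight n b)) / (real n * real (card B))"
    and "(\<Sum>b\<in>B. real (hweight n b)) / (real n * real (card B)) \<le> 1 - 1 / real (card (UNIV :: 'f set))"
  shows "real (card B) \<le> real (card (UNIV :: 'f set)) powr (real d *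
           entropy_q (real (card (UNIV :: 'f set))) ((\<Sum>b\<in>B. real (hweight n b)) / (real n * real (card B))))"
proof -
  define q where "q = real CARD('f)"
  define w where "w = mean_weight n B"
  have "q \<ge> 2"
    using card_mono[of "UNIV::'f set" "{0, 1}"] by (simp add: q_def)
  have "finite B"
    by (rule finite_subset[OF assms(2) balanced_code_finite[OF assms(1)]])
  have "real (card B) \<le> q powr (d * entropy_q q w)"
  proof (cases "w = 0")
    case True
    have "B \<subseteq> space {..<n}"
      using assms(1,2) balanced_code_subset_space by blast
    then have "card B \<le> 1"
      using \<open>finite B\<close> True unfolding w_def by (rule card_le_1_if_mean_weight_zero)
    then show ?thesis
      using True \<open>q \<ge> 2\<close> by (simp add: entropy_q_def xlogx_def)
  next
    case False
    have "0 \<le> w" "w \<le> 1 - 1 / q" "1 / q > 0"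
      using assms(4,5) \<open>q \<ge> 2\<close> by (simp_all add: w_def q_def mean_weight_def)
    then have "0 < w" "w < 1"
      using False by linarith+
    moreover have "CARD('f) > 1"
      using \<open>q \<ge> 2\<close> by (simp add: q_def)
    ultimately show ?thesis
      using balanced_code_card_le_powr_entropy_q[OF assms(1-3)] unfolding q_def w_def by blast
  qed
  then show ?thesis
    by (simp add: q_def w_def mean_weight_def)
qed

end
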